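(* Let $\mathcal{B}$ be a complete topological ring and let $\mathrm{e}\colon\mathcal{B}\to\mathcal{B}\{T\}$ be a restricted exponential homomorphism. Then the compositions $\varphi=\pi_{(1)}\circ\mathrm{e}\colon\mathcal{B}\to\mathcal{B}$ and $\psi=\pi_{(-1)}\circ\mathrm{e}\colon\mathcal{B}\to\mathcal{B}$ are continuous ring automorphisms of $\mathcal{B}$ inverse to each other, where $\pi_{(\pm1)}\colon\mathcal{B}\{T\}\to\mathcal{B}$ is the continuous $\mathcal{B}$-algebra homomorphism $\sum_ib_iT^i\mapsto\sum_ib_i(\pm1)^i$.
   Context: Conventions: topological rings are linearly topologized with a countable fundamental system of open ideals; homomorphisms are continuous; complete means the canonical map to $\varprojlim_{\mathfrak{a}}\mathcal{B}/\mathfrak{a}$ (open ideals, discrete quotients) is a topological isomorphism. $\mathcal{B}\{T\}$, $\mathcal{B}\{T,T'\}$ denote restricted power series over $\mathcal{B}$ (coefficients converging to $0$, so the sums above converge), topologized by the ideals of series with all coefficients in a given open ideal. A restricted exponential homomorphism is a continuous ring homomorphism $\mathrm{e}\colon\mathcal{B}\to\mathcal{B}\{T\}$, $\mathrm{e}(b)=\sum_i\mathrm{e}_i(b)T^i$, with $\mathrm{e}_0=\mathrm{id}$ and $\sum_{i,j}\mathrm{e}_j(\mathrm{e}_i(b))T'^jT^i=\sum_\ell\mathrm{e}_\ell(b)(T+T')^\ell$ for all $b$. *)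

theory Defs
  imports Main
begin

text \<open>A linearly topologized commutative ring with a countable fundamental system
  of open ideals, given by a decreasing sequence I 0, I 1, ... of ideals.
  The open ideals are exactly the ideals containing some I n.\<close>

definition is_ideal :: "'a::comm_ring_1 set \<Rightarrow> bool" where
  "is_ideal J \<longleftrightarrow> 0 \<in> J \<and> (\<forall>x\<in>J. \<forall>y\<in>J. x + y \<in> J) \<and> (\<forall>x\<in>J. - x \<in> J)
     \<and> (\<forall>r x. x \<in> J \<longrightarrow> r * x \<in> J)"

definition lin_top :: "(nat \<Rightarrow> 'a::comm_ring_1 set) \<Rightarrow> bool" where
  "lin_top I \<longleftrightarrow> (\<forall>n. is_ideal (I n)) \<and> (\<forall>n. I (Suc n) \<subseteq> I n)"

text \<open>Elements of the inverse limit of the discrete quotients B / I n, represented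
  by compatible families of representatives.\<close>
definition compatible_family :: "(nat \<Rightarrow> 'a::comm_ring_1 set) \<Rightarrow> (nat \<Rightarrow> 'a) \<Rightarrow> bool" where
  "compatible_family I x \<longleftrightarrow> (\<forall>m n. n \<le> m \<longrightarrow> x m - x n \<in> I n)"

text \<open>Completeness: the canonical map B \<rightarrow> lim B / I n is bijective
  (injective: Hausdorff; surjective: every compatible family comes from an element).
  For linear topologies this bijection is automatically a homeomorphism.\<close>
definition complete_lin :: "(nat \<Rightarrow> 'a::comm_ring_1 set) \<Rightarrow> bool" where
  "complete_lin I \<longleftrightarrow> lin_top I \<and> (\<Inter>n. I n) = {0}
     \<and> (\<forall>x. compatible_family I x \<longrightarrow> (\<exists>b. \<forall>n. b - x n \<in> I n))"

definition cont_map :: "(nat \<Rightarrow> 'a::comm_ring_1 set) \<Rightarrow> ('a \<Rightarrow> 'a) \<Rightarrow> bool" where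
  "cont_map I f \<longleftrightarrow> (\<forall>n. \<exists>m. \<forall>b\<in>I m. f b \<in> I n)"

definition ring_hom_on :: "('a::comm_ring_1 \<Rightarrow> 'a) \<Rightarrow> bool" where
  "ring_hom_on f \<longleftrightarrow> f 1 = 1 \<and> (\<forall>a b. f (a + b) = f a + f b) \<and> (\<forall>a b. f (a * b) = f a * f b)"

definition lin_tendsto :: "(nat \<Rightarrow> 'a::comm_ring_1 set) \<Rightarrow> (nat \<Rightarrow> 'a) \<Rightarrow> 'a \<Rightarrow> bool" where
  "lin_tendsto I s L \<longleftrightarrow> (\<forall>n. \<exists>N. \<forall>k\<ge>N. s k - L \<in> I n)"

definition lin_suminf :: "(nat \<Rightarrow> 'a::comm_ring_1 set) \<Rightarrow> (nat \<Rightarrow> 'a) \<Rightarrow> 'a" where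
  "lin_suminf I c = (THE L. lin_tendsto I (\<lambda>N. \<Sum>i<N. c i) L)"

definition restricted :: "(nat \<Rightarrow> 'a::comm_ring_1 set) \<Rightarrow> (nat \<Rightarrow> 'a) \<Rightarrow> bool" where
  "restricted I c \<longleftrightarrow> (\<forall>n. \<exists>N. \<forall>i\<ge>N. c i \<in> I n)"

text \<open>A restricted exponential homomorphism e : B \<rightarrow> B{T}, written as
  e b i = e_i(b).  Ring homomorphism into B{T} (with Cauchy product), continuous
  for the topology on B{T} given by the ideals of series with all coefficients in
  an open ideal, e_0 = id, and the identity
  sum_{i,j} e_j(e_i(b)) T'^j T^i = sum_l e_l(b) (T+T')^l in B{T,T'},
  written coefficientwise (coefficient of T^i T'^j).\<close>
definition restricted_exp_hom ::
    "(nat \<Rightarrow> 'a::comm_ring_1 set) \<Rightarrow> ('a \<Rightarrow> nat \<Rightarrow> 'a) \<Rightarrow> bool" where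
  "restricted_exp_hom I e \<longleftrightarrow>
     (\<forall>b. restricted I (e b))
     \<and> e 1 = (\<lambda>i. if i = 0 then 1 else 0)
     \<and> (\<forall>a b i. e (a + b) i = e a i + e b i)
     \<and> (\<forall>a b k. e (a * b) k = (\<Sum>i\<le>k. e a i * e b (k - i)))
     \<and> (\<forall>n. \<exists>m. \<forall>b\<in>I m. \<forall>i. e b i \<in> I n)
     \<and> (\<forall>b. e b 0 = b)
     \<and> (\<forall>b i j. e (e b i) j = of_nat ((i + j) choose i) * e b (i + j))"

definition exp_phi :: "(nat \<Rightarrow> 'a::comm_ring_1 set) \<Rightarrow> ('a \<Rightarrow> nat \<Rightarrow> 'a) \<Rightarrow> 'a \<Rightarrow> 'a" where
  "exp_phi I e b = lin_suminf I (\<lambda>i. e b i)"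

definition exp_psi :: "(nat \<Rightarrow> 'a::comm_ring_1 set) \<Rightarrow> ('a \<Rightarrow> nat \<Rightarrow> 'a) \<Rightarrow> 'a \<Rightarrow> 'a" where
  "exp_psi I e b = lin_suminf I (\<lambda>i. (- 1) ^ i * e b i)"

end

theory Submission
  imports Defs HOL.Modules
begin

(* For every t the specialisation exp_eval t = \<pi>_(t) \<circ> e at T = t is a continuous ring
   homomorphism, because in a complete ring summation of restricted series commutes with
   sums, Cauchy products and continuous additive maps. Specialising the exponential identity
   at T = t, T' = s gives exp_eval s \<circ> exp_eval t = exp_eval (s + t) whenever e(t) = t
   (so that each e_j commutes with multiplication by powers of t), e.g. for t = 1 and t = -1;
   the double series involved may be summed along diagonals since its terms tend to 0 with
   i + j. As exp_eval 0 is the identity, exp_eval 1 and exp_eval (-1) are mutually inverse. *)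

locale lin_top_ring =
  fixes I :: "nat \<Rightarrow> 'a::comm_ring_1 set"
  assumes lin_top: "lin_top I"
begin

lemma is_ideal: "is_ideal (I n)"
  using lin_top by (simp add: lin_top_def)

lemma ideal_zero [simp]: "0 \<in> I n"
  using is_ideal by (simp add: is_ideal_def)

lemma ideal_add: "x \<in> I n \<Longrightarrow> y \<in> I n \<Longrightarrow> x + y \<in> I n"
  using is_ideal by (simp add: is_ideal_def)

lemma ideal_uminus: "x \<in> I n \<Longrightarrow> - x \<in> I n"
  using is_ideal by (simp add: is_ideal_def)

lemma ideal_diff: "x \<in> I n \<Longrightarrow> y \<in> I n \<Longrightarrow> x - y \<in> I n"
  using ideal_add[of x n "- y"] ideal_uminus[of y n] by simp

lemma ideal_mult_left: "x \<in> I n \<Longrightarrow> r * x \<in> I n"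
  using is_ideal by (simp add: is_ideal_def)

lemma ideal_mult_right: "x \<in> I n \<Longrightarrow> x * r \<in> I n"
  using ideal_mult_left[of x n r] by (simp add: mult.commute)

lemma ideal_sum: "(\<And>i. i \<in> A \<Longrightarrow> f i \<in> I n) \<Longrightarrow> sum f A \<in> I n"
  by (induction A rule: infinite_finite_induct) (auto intro: ideal_add)

lemma ideal_antimono: "n \<le> m \<Longrightarrow> I m \<subseteq> I n"
  using lin_top lift_Suc_antimono_le[of I n m] by (simp add: lin_top_def)

lemma partial_sums_diff_in_ideal:
  fixes c :: "nat \<Rightarrow> 'a"
  assumes "\<And>i. min a b \<le> i \<Longrightarrow> c i \<in> I n"
  shows "(\<Sum>i<a. c i) - (\<Sum>i<b. c i) \<in> I n"
proof -
  have ordered: "(\<Sum>i<q. c i) - (\<Sum>i<p. c i) \<in> I n" if "p \<le> q" "\<And>i. p \<le> i \<Longrightarrow> c i \<in> I n"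
    for p q
  proof -
    have "(\<Sum>i<q. c i) - (\<Sum>i<p. c i) = (\<Sum>i\<in>{p..<q}. c i)"
      using sum_diff_nat_ivl[of 0 p q c] \<open>p \<le> q\<close> by (simp add: atLeast0LessThan)
    also have "\<dots> \<in> I n"
      using that(2) by (intro ideal_sum) simp
    finally show ?thesis .
  qed
  show ?thesis
  proof (cases "a \<le> b")
    case True
    then show ?thesis
      using ordered[of a b] ideal_uminus assms by (fastforce simp: min_def)
  next
    case False
    then show ?thesis
      using ordered[of b a] assms by (simp add: min_def)
  qed
qed

lemma square_sum_diagonal_sum_diff_in_ideal:
  fixes a :: "nat \<Rightarrow> nat \<Rightarrow> 'a"
  assumes "\<And>i j. N \<le> i + j \<Longrightarrow> a i j \<in> I n"
  shows "(\<Sum>i<N. \<Sum>j<N. a i j) - (\<Sum>l<N. \<Sum>i\<le>l. a i (l - i)) \<in> I n"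
proof -
  define square where "square = {..<N} \<times> {..<N}"
  define triangle where "triangle = {(i, j). i + j < N}"
  have "triangle \<subseteq> square"
    by (auto simp: square_def triangle_def)
  then have "(\<Sum>(i, j)\<in>square. a i j) - (\<Sum>(i, j)\<in>triangle. a i j)
      = (\<Sum>(i, j)\<in>square - triangle. a i j)"
    by (simp add: square_def sum_diff)
  also have "\<dots> \<in> I n"
    using assms by (intro ideal_sum) (auto simp: triangle_def)
  also have "(\<Sum>(i, j)\<in>square. a i j) = (\<Sum>i<N. \<Sum>j<N. a i j)"
    by (simp add: square_def sum.cartesian_product)
  also have "(\<Sum>(i, j)\<in>triangle. a i j) = (\<Sum>l<N. \<Sum>i\<le>l. a i (l - i))"
    unfolding triangle_def by (rule sum.triangle_reindex)
  finally show ?thesis .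
qed

lemma diagonally_small_restricted:
  fixes a :: "nat \<Rightarrow> nat \<Rightarrow> 'a"
  assumes "\<And>n. \<exists>N. \<forall>i j. N \<le> i + j \<longrightarrow> a i j \<in> I n"
  shows "restricted I (a i)" "restricted I (\<lambda>l. \<Sum>i\<le>l. a i (l - i))"
  unfolding restricted_def
proof safe
  fix n
  obtain N where N: "\<forall>i j. N \<le> i + j \<longrightarrow> a i j \<in> I n"
    using assms by blast
  then show "\<exists>N. \<forall>j\<ge>N. a i j \<in> I n"
    using trans_le_add2 by blast
  from N show "\<exists>N. \<forall>l\<ge>N. (\<Sum>i\<le>l. a i (l - i)) \<in> I n"
    by (intro exI[of _ N] allI impI ideal_sum) simp
qed

lemma restricted_mult_left: "restricted I c \<Longrightarrow> restricted I (\<lambda>i. r i * c i)"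
  unfolding restricted_def by (meson ideal_mult_left)

lemma lin_tendsto_add:
  assumes "lin_tendsto I s L" "lin_tendsto I t M"
  shows "lin_tendsto I (\<lambda>k. s k + t k) (L + M)"
  unfolding lin_tendsto_def
proof
  fix n
  obtain N1 N2 where "\<forall>k\<ge>N1. s k - L \<in> I n" "\<forall>k\<ge>N2. t k - M \<in> I n"
    using assms unfolding lin_tendsto_def by blast
  moreover have "(s k + t k) - (L + M) = (s k - L) + (t k - M)" for k
    by simp
  ultimately have "\<forall>k\<ge>max N1 N2. (s k + t k) - (L + M) \<in> I n"
    by (metis ideal_add max.bounded_iff)
  then show "\<exists>N. \<forall>k\<ge>N. s k + t k - (L + M) \<in> I n" ..
qed

lemma lin_tendsto_additive_cont:
  assumes "additive f" "cont_map I f" "lin_tendsto I s L"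
  shows "lin_tendsto I (\<lambda>k. f (s k)) (f L)"
  unfolding lin_tendsto_def
proof
  fix n
  obtain m where m: "\<forall>b\<in>I m. f b \<in> I n"
    using assms(2) unfolding cont_map_def by blast
  obtain N where "\<forall>k\<ge>N. s k - L \<in> I m"
    using assms(3) unfolding lin_tendsto_def by blast
  then have "\<forall>k\<ge>N. f (s k) - f L \<in> I n"
    using m additive.diff[OF assms(1)] by metis
  then show "\<exists>N. \<forall>k\<ge>N. f (s k) - f L \<in> I n" ..
qed

end

locale complete_lin_ring =
  fixes I :: "nat \<Rightarrow> 'a::comm_ring_1 set"
  assumes complete_lin: "complete_lin I"

sublocale complete_lin_ring \<subseteq> lin_top_ring
  using complete_lin by unfold_locales (simp add: complete_lin_def)

context complete_lin_ring
begin

lemma eq_if_diff_in_ideals: "(\<And>n. x - y \<in> I n) \<Longrightarrow> x = y"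
  using complete_lin unfolding complete_lin_def by (metis INT_I right_minus_eq singletonD)

lemma lin_tendsto_unique:
  assumes "lin_tendsto I s L" "lin_tendsto I s M"
  shows "L = M"
proof (rule eq_if_diff_in_ideals)
  fix n
  obtain N1 N2 where "\<forall>k\<ge>N1. s k - L \<in> I n" "\<forall>k\<ge>N2. s k - M \<in> I n"
    using assms unfolding lin_tendsto_def by blast
  then have "s (max N1 N2) - M \<in> I n" "s (max N1 N2) - L \<in> I n"
    by simp_all
  then have "(s (max N1 N2) - M) - (s (max N1 N2) - L) \<in> I n"
    by (rule ideal_diff)
  then show "L - M \<in> I n"
    by simp
qed

lemma restricted_partial_sums_converge:
  assumes "restricted I c"
  shows "\<exists>L. lin_tendsto I (\<lambda>N. \<Sum>i<N. c i) L"
proof -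
  obtain M where M: "\<And>n i. M n \<le> i \<Longrightarrow> c i \<in> I n"
    using assms unfolding restricted_def by metis
  define x where "x n = (\<Sum>i<M n. c i)" for n
  have "compatible_family I x"
    unfolding compatible_family_def
  proof (intro allI impI)
    fix m n :: nat
    assume "n \<le> m"
    then have "c i \<in> I n" if "min (M m) (M n) \<le> i" for i
      using that M ideal_antimono[OF \<open>n \<le> m\<close>] by (cases "M m \<le> M n") (auto simp: min_def)
    then show "x m - x n \<in> I n"
      unfolding x_def by (rule partial_sums_diff_in_ideal)
  qed
  then obtain L where L: "\<And>n. L - x n \<in> I n"
    using complete_lin unfolding complete_lin_def by blast
  have "lin_tendsto I (\<lambda>N. \<Sum>i<N. c i) L"
    unfolding lin_tendsto_def
  proof (intro allI exI[of _ "M _"] impI)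
    fix n k
    assume "M n \<le> k"
    then have "(\<Sum>i<k. c i) - x n \<in> I n"
      unfolding x_def using M by (intro partial_sums_diff_in_ideal) simp
    from ideal_diff[OF this L]
    show "(\<Sum>i<k. c i) - L \<in> I n"
      by simp
  qed
  then show ?thesis ..
qed

lemma lin_suminf_eqI:
  assumes "lin_tendsto I (\<lambda>N. \<Sum>i<N. c i) L"
  shows "lin_suminf I c = L"
  unfolding lin_suminf_def using assms by (rule the_equality) (erule lin_tendsto_unique[OF _ assms])

lemma lin_tendsto_lin_suminf:
  assumes "restricted I c"
  shows "lin_tendsto I (\<lambda>N. \<Sum>i<N. c i) (lin_suminf I c)"
proof -
  obtain L where "lin_tendsto I (\<lambda>N. \<Sum>i<N. c i) L"
    using restricted_partial_sums_converge[OF assms] ..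
  with lin_suminf_eqI[OF this] show ?thesis
    by simp
qed

lemma lin_suminf_tail:
  assumes "restricted I c" "\<And>i. N \<le> i \<Longrightarrow> c i \<in> I n"
  shows "lin_suminf I c - (\<Sum>i<N. c i) \<in> I n"
proof -
  obtain N' where N': "\<forall>k\<ge>N'. (\<Sum>i<k. c i) - lin_suminf I c \<in> I n"
    using lin_tendsto_lin_suminf[OF assms(1)] unfolding lin_tendsto_def by blast
  define K where "K = max N N'"
  have "(\<Sum>i<K. c i) - (\<Sum>i<N. c i) \<in> I n"
    using assms(2) by (intro partial_sums_diff_in_ideal) (simp add: K_def)
  moreover have "(\<Sum>i<K. c i) - lin_suminf I c \<in> I n"
    using N' by (simp add: K_def)
  ultimately have "((\<Sum>i<K. c i) - (\<Sum>i<N. c i)) - ((\<Sum>i<K. c i) - lin_suminf I c) \<in> I n"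
    by (rule ideal_diff)
  then show ?thesis
    by simp
qed

lemma lin_suminf_in_ideal: "restricted I c \<Longrightarrow> (\<And>i. c i \<in> I n) \<Longrightarrow> lin_suminf I c \<in> I n"
  using lin_suminf_tail[of c 0 n] by (simp only: lessThan_0 sum.empty diff_zero le0)

lemma lin_suminf_finite:
  assumes "\<And>i. N \<le> i \<Longrightarrow> c i = 0"
  shows "lin_suminf I c = (\<Sum>i<N. c i)"
proof (rule lin_suminf_eqI)
  have "(\<Sum>i<k. c i) = (\<Sum>i<N. c i)" if "N \<le> k" for k
    using that assms by (intro sum.mono_neutral_right) auto
  then show "lin_tendsto I (\<lambda>k. \<Sum>i<k. c i) (\<Sum>i<N. c i)"
    unfolding lin_tendsto_def by (metis diff_self ideal_zero)
qed

lemma lin_suminf_add: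
  assumes "restricted I f" "restricted I g"
  shows "lin_suminf I (\<lambda>i. f i + g i) = lin_suminf I f + lin_suminf I g"
  using lin_tendsto_add[OF lin_tendsto_lin_suminf[OF assms(1)] lin_tendsto_lin_suminf[OF assms(2)]]
  by (intro lin_suminf_eqI) (simp add: sum.distrib)

lemma lin_suminf_additive_cont:
  assumes "additive f" "cont_map I f" "restricted I c"
  shows "lin_suminf I (\<lambda>i. f (c i)) = f (lin_suminf I c)"
  using lin_tendsto_additive_cont[OF assms(1,2) lin_tendsto_lin_suminf[OF assms(3)]]
  by (intro lin_suminf_eqI) (simp add: additive.sum[OF assms(1)])

lemma lin_suminf_mult_left:
  assumes "restricted I c"
  shows "lin_suminf I (\<lambda>i. r * c i) = r * lin_suminf I c"
proof (rule lin_suminf_additive_cont[OF _ _ assms])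
  show "additive ((*) r)"
    by (simp add: additive_def distrib_left)
  show "cont_map I ((*) r)"
    unfolding cont_map_def by (blast intro: ideal_mult_left)
qed

lemma lin_suminf_mult_right:
  "restricted I c \<Longrightarrow> lin_suminf I (\<lambda>i. c i * r) = lin_suminf I c * r"
  using lin_suminf_mult_left by (simp add: mult.commute)

lemma lin_suminf_diagonal:
  fixes a :: "nat \<Rightarrow> nat \<Rightarrow> 'a"
  assumes small: "\<And>n. \<exists>N. \<forall>i j. N \<le> i + j \<longrightarrow> a i j \<in> I n"
  shows "lin_suminf I (\<lambda>i. lin_suminf I (a i)) = lin_suminf I (\<lambda>l. \<Sum>i\<le>l. a i (l - i))"
proof -
  note rows = diagonally_small_restricted(1)[OF small]
  have row_small: "lin_suminf I (a i) \<in> I n" if "\<forall>i j. N \<le> i + j \<longrightarrow> a i j \<in> I n" "N \<le> i"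
    for i N n
    using that by (intro lin_suminf_in_ideal rows) (simp add: trans_le_add1)
  have outer: "restricted I (\<lambda>i. lin_suminf I (a i))"
    unfolding restricted_def using small row_small by meson
  note diagonal = diagonally_small_restricted(2)[OF small]
  show ?thesis
  proof (rule eq_if_diff_in_ideals)
    fix n
    obtain N where N: "\<forall>i j. N \<le> i + j \<longrightarrow> a i j \<in> I n"
      using small by blast
    have outer_tail: "lin_suminf I (\<lambda>i. lin_suminf I (a i)) - (\<Sum>i<N. lin_suminf I (a i)) \<in> I n"
      using N row_small by (intro lin_suminf_tail outer)
    have row_tails: "(\<Sum>i<N. lin_suminf I (a i) - (\<Sum>j<N. a i j)) \<in> I n"
      using N by (intro ideal_sum lin_suminf_tail rows) (simp add: trans_le_add2)
    have square: "(\<Sum>i<N. \<Sum>j<N. a i j) - (\<Sum>l<N. \<Sum>i\<le>l. a i (l - i)) \<in> I n"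
      using N by (intro square_sum_diagonal_sum_diff_in_ideal) simp
    have diagonal_tail:
      "lin_suminf I (\<lambda>l. \<Sum>i\<le>l. a i (l - i)) - (\<Sum>l<N. \<Sum>i\<le>l. a i (l - i)) \<in> I n"
      using N by (intro lin_suminf_tail diagonal ideal_sum) simp
    show "lin_suminf I (\<lambda>i. lin_suminf I (a i)) - lin_suminf I (\<lambda>l. \<Sum>i\<le>l. a i (l - i)) \<in> I n"
      using ideal_diff[OF ideal_add[OF ideal_add[OF outer_tail row_tails] square] diagonal_tail]
      by (simp add: sum_subtractf)
  qed
qed

lemma lin_suminf_cauchy_product:
  assumes "restricted I f" "restricted I g"
  shows "lin_suminf I (\<lambda>k. \<Sum>i\<le>k. f i * g (k - i)) = lin_suminf I f * lin_suminf I g"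
proof -
  have "lin_suminf I f * lin_suminf I g = lin_suminf I (\<lambda>i. f i * lin_suminf I g)"
    using lin_suminf_mult_right[OF assms(1)] by simp
  also have "\<dots> = lin_suminf I (\<lambda>i. lin_suminf I (\<lambda>j. f i * g j))"
    using lin_suminf_mult_left[OF assms(2)] by simp
  also have "\<dots> = lin_suminf I (\<lambda>k. \<Sum>i\<le>k. f i * g (k - i))"
  proof (rule lin_suminf_diagonal)
    fix n
    obtain N1 N2 where "\<forall>i\<ge>N1. f i \<in> I n" "\<forall>j\<ge>N2. g j \<in> I n"
      using assms unfolding restricted_def by blast
    then have "f i * g j \<in> I n" if "N1 + N2 \<le> i + j" for i j
      using that by (cases "N1 \<le> i") (auto intro: ideal_mult_left ideal_mult_right)
    then show "\<exists>N. \<forall>i j. N \<le> i + j \<longrightarrow> f i * g j \<in> I n"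
      by blast
  qed
  finally show ?thesis ..
qed

end

locale restricted_exp_ring = complete_lin_ring +
  fixes e :: "'a::comm_ring_1 \<Rightarrow> nat \<Rightarrow> 'a"
  assumes restricted_exp_hom: "restricted_exp_hom I e"
begin

lemma e_restricted: "restricted I (e b)"
  using restricted_exp_hom by (simp add: restricted_exp_hom_def)

lemma e_one: "e 1 = (\<lambda>i. if i = 0 then 1 else 0)"
  using restricted_exp_hom by (simp add: restricted_exp_hom_def)

lemma e_add: "e (a + b) i = e a i + e b i"
  using restricted_exp_hom by (simp add: restricted_exp_hom_def)

lemma e_mult: "e (a * b) k = (\<Sum>i\<le>k. e a i * e b (k - i))"
  using restricted_exp_hom by (simp add: restricted_exp_hom_def)

lemma e_uniformly_cont: "\<exists>m. \<forall>b\<in>I m. \<forall>i. e b i \<in> I n"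
  using restricted_exp_hom by (simp add: restricted_exp_hom_def)

lemma e_coeff_zero: "e b 0 = b"
  using restricted_exp_hom by (simp add: restricted_exp_hom_def)

lemma e_iterate: "e (e b i) j = of_nat ((i + j) choose i) * e b (i + j)"
  using restricted_exp_hom by (simp add: restricted_exp_hom_def)

lemma additive_e_coeff: "additive (\<lambda>b. e b j)"
  by (simp add: additive_def e_add)

lemma cont_map_e_coeff: "cont_map I (\<lambda>b. e b j)"
  unfolding cont_map_def using e_uniformly_cont by blast

definition e_invariant :: "'a \<Rightarrow> bool" where
  "e_invariant t \<longleftrightarrow> e t = (\<lambda>i. if i = 0 then t else 0)"

lemma e_invariant_one: "e_invariant 1"
  by (simp add: e_invariant_def e_one)

lemma e_invariant_uminus: "e_invariant t \<Longrightarrow> e_invariant (- t)"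
  using additive.minus[OF additive_e_coeff] by (simp add: e_invariant_def fun_eq_iff)

lemma e_mult_invariant:
  assumes "e_invariant t"
  shows "e (t * b) j = t * e b j"
proof -
  have "e (t * b) j = (\<Sum>i\<le>j. if i = 0 then t * e b j else 0)"
    using assms unfolding e_mult e_invariant_def by (intro sum.cong) auto
  then show ?thesis
    by simp
qed

lemma e_invariant_mult:
  assumes "e_invariant t" "e_invariant u"
  shows "e_invariant (t * u)"
  using assms(2) unfolding e_invariant_def by (simp add: e_mult_invariant[OF assms(1)] fun_eq_iff)

lemma e_invariant_power: "e_invariant t \<Longrightarrow> e_invariant (t ^ k)"
  by (induction k) (simp_all add: e_invariant_one e_invariant_mult)

definition exp_eval :: "'a \<Rightarrow> 'a \<Rightarrow> 'a" where
  "exp_eval t b = lin_suminf I (\<lambda>i. t ^ i * e b i)"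

lemma exp_eval_restricted: "restricted I (\<lambda>i. t ^ i * e b i)"
  by (rule restricted_mult_left[OF e_restricted])

lemma ring_hom_exp_eval: "ring_hom_on (exp_eval t)"
  unfolding ring_hom_on_def
proof (intro conjI allI)
  show "exp_eval t 1 = 1"
    unfolding exp_eval_def e_one by (subst lin_suminf_finite[of 1]) simp_all
  fix a b
  show "exp_eval t (a + b) = exp_eval t a + exp_eval t b"
    unfolding exp_eval_def e_add distrib_left
    by (rule lin_suminf_add[OF exp_eval_restricted exp_eval_restricted])
  have "t ^ k * e (a * b) k = (\<Sum>i\<le>k. (t ^ i * e a i) * (t ^ (k - i) * e b (k - i)))" for k
    unfolding e_mult sum_distrib_left
  proof (rule sum.cong)
    fix i
    assume "i \<in> {..k}"
    then have "t ^ k = t ^ i * t ^ (k - i)"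
      by (simp flip: power_add)
    then show "t ^ k * (e a i * e b (k - i)) = (t ^ i * e a i) * (t ^ (k - i) * e b (k - i))"
      by (simp add: ac_simps)
  qed simp
  then show "exp_eval t (a * b) = exp_eval t a * exp_eval t b"
    unfolding exp_eval_def by (simp add: lin_suminf_cauchy_product[OF exp_eval_restricted exp_eval_restricted])
qed

lemma cont_map_exp_eval: "cont_map I (exp_eval t)"
  unfolding cont_map_def
proof
  fix n
  obtain m where "\<forall>b\<in>I m. \<forall>i. e b i \<in> I n"
    using e_uniformly_cont by blast
  then have "\<forall>b\<in>I m. exp_eval t b \<in> I n"
    unfolding exp_eval_def by (auto intro: lin_suminf_in_ideal exp_eval_restricted ideal_mult_left)
  then show "\<exists>m. \<forall>b\<in>I m. exp_eval t b \<in> I n" ..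
qed

lemma exp_eval_zero: "exp_eval 0 b = b"
  unfolding exp_eval_def by (subst lin_suminf_finite[of 1]) (simp_all add: e_coeff_zero power_0_left)

lemma e_exp_eval:
  assumes "e_invariant t"
  shows "e (exp_eval t b) j = lin_suminf I (\<lambda>i. t ^ i * (of_nat ((i + j) choose i) * e b (i + j)))"
proof -
  have "e (exp_eval t b) j = lin_suminf I (\<lambda>i. e (t ^ i * e b i) j)"
    unfolding exp_eval_def
    by (rule lin_suminf_additive_cont[OF additive_e_coeff cont_map_e_coeff exp_eval_restricted, symmetric])
  also have "\<dots> = lin_suminf I (\<lambda>i. t ^ i * (of_nat ((i + j) choose i) * e b (i + j)))"
    by (simp add: e_mult_invariant e_invariant_power assms e_iterate)
  finally show ?thesis .
qed

lemma exp_eval_exp_eval: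
  assumes "e_invariant t"
  shows "exp_eval s (exp_eval t b) = exp_eval (s + t) b"
proof -
  define a where "a j i = s ^ j * (t ^ i * (of_nat ((i + j) choose i) * e b (i + j)))" for j i
  have "restricted I (\<lambda>i. e b (i + j))" for j
    using e_restricted unfolding restricted_def by (meson trans_le_add1)
  then have inner_restricted: "restricted I (\<lambda>i. t ^ i * (of_nat ((i + j) choose i) * e b (i + j)))" for j
    using restricted_mult_left[of "\<lambda>i. e b (i + j)" "\<lambda>i. t ^ i * of_nat ((i + j) choose i)"]
    by (simp add: mult.assoc)
  have "exp_eval s (exp_eval t b) = lin_suminf I (\<lambda>j. lin_suminf I (a j))"
    unfolding exp_eval_def[of s] e_exp_eval[OF assms] a_def
    by (simp add: lin_suminf_mult_left[OF inner_restricted])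
  also have "\<dots> = lin_suminf I (\<lambda>l. \<Sum>j\<le>l. a j (l - j))"
  proof (rule lin_suminf_diagonal)
    fix n
    obtain N where "\<forall>l\<ge>N. e b l \<in> I n"
      using e_restricted unfolding restricted_def by blast
    then have "\<forall>j i. N \<le> j + i \<longrightarrow> a j i \<in> I n"
      unfolding a_def by (simp add: add.commute ideal_mult_left)
    then show "\<exists>N. \<forall>j i. N \<le> j + i \<longrightarrow> a j i \<in> I n" ..
  qed
  also have "\<dots> = exp_eval (s + t) b"
    unfolding exp_eval_def
  proof (intro arg_cong[where f = "lin_suminf I"] ext)
    fix l
    have "a j (l - j) = of_nat (l choose j) * s ^ j * t ^ (l - j) * e b l" if "j \<le> l" for j
      using that binomial_symmetric[OF that] by (simp add: a_def ac_simps)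
    then show "(\<Sum>j\<le>l. a j (l - j)) = (s + t) ^ l * e b l"
      by (simp add: binomial_ring sum_distrib_right)
  qed
  finally show ?thesis .
qed

end

theorem proposition2p11:
  fixes I :: "nat \<Rightarrow> 'a::comm_ring_1 set" and e :: "'a \<Rightarrow> nat \<Rightarrow> 'a"
  assumes "complete_lin I"
    and "restricted_exp_hom I e"
  shows "ring_hom_on (exp_phi I e) \<and> ring_hom_on (exp_psi I e)
       \<and> cont_map I (exp_phi I e) \<and> cont_map I (exp_psi I e)
       \<and> bij (exp_phi I e) \<and> bij (exp_psi I e)
       \<and> (\<forall>b. exp_psi I e (exp_phi I e b) = b)
       \<and> (\<forall>b. exp_phi I e (exp_psi I e b) = b)"
proof -
  interpret restricted_exp_ring I e
    using assms by unfold_locales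
  have phi: "exp_phi I e = exp_eval 1"
    by (simp add: fun_eq_iff exp_phi_def exp_eval_def)
  have psi: "exp_psi I e = exp_eval (- 1)"
    by (simp add: fun_eq_iff exp_psi_def exp_eval_def)
  have psi_phi: "exp_eval (- 1) \<circ> exp_eval 1 = id"
    using exp_eval_exp_eval[OF e_invariant_one] by (simp add: fun_eq_iff exp_eval_zero)
  have phi_psi: "exp_eval 1 \<circ> exp_eval (- 1) = id"
    using exp_eval_exp_eval[OF e_invariant_uminus[OF e_invariant_one]]
    by (simp add: fun_eq_iff exp_eval_zero)
  show ?thesis
    unfolding phi psi using ring_hom_exp_eval cont_map_exp_eval
      o_bij[OF psi_phi phi_psi] o_bij[OF phi_psi psi_phi] psi_phi phi_psi
    by (simp add: fun_eq_iff)
qed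

end
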